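(* Let $0<p_{\min}\le p_{\max}$ be vectors in $\mathbb{R}^n$ and $\mathcal{D}_p=\{p:p_{\min}\le p\le p_{\max}\}$. Let $\mathcal{I}:\mathbb{R}^n_{\ge0}\to\mathbb{R}^n$ be differentiable and standard, with $\mathcal{I}(\mathcal{D}_p)\subseteq\mathcal{D}_p$, and let $\kappa:\mathbb{R}^n\to\mathbb{R}^m$ be differentiable with $\nabla\kappa(p)\ge0$ having non-zero rows for all $p\in\mathcal{D}_p$. Consider the problem \[ \min_{p\in\mathcal{D}_p}\ \kappa(p)\quad\text{s.t.}\quad p\ge\mathcal{I}(p), \] and assume it is feasible. Then, with $x=\ln p$, $f_0(x)=\kappa(e^x)$ and $f(x)=\ln\mathcal{I}(e^x)$, the equivalent problem $\min_x f_0(x)$ s.t. $x\ge f(x)$ is Fast-Lipschitz, and consequently the unique fixed point $p^\star=\mathcal{I}(p^\star)$ in $\mathcal{D}_p$ is the unique Pareto optimal solution of the original problem (and the iteration $p^{k+1}=\mathcal{I}(p^k)$ converges to it).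
   Context: Inequalities are element-wise; $\ln$ and $\exp$ act componentwise. $\mathcal{I}$ is standard if for all $p,q\ge0$: (positivity) $\mathcal{I}(p)>0$; (monotonicity) $p\ge q\Rightarrow\mathcal{I}(p)\ge\mathcal{I}(q)$; (scalability) for all $c>1$, $\mathcal{I}(cp)<c\,\mathcal{I}(p)$. Gradient convention: $[\nabla\kappa(p)]_{ij}=\partial\kappa_j(p)/\partial p_i$. For a vector objective, a feasible $p$ is Pareto optimal (minimization) if no feasible $q$ has $\kappa(q)\le\kappa(p)$, $\kappa(q)\neq\kappa(p)$. A problem $\min g_0(x)$ s.t. $x\ge g(x)$ is Fast-Lipschitz if it admits a unique Pareto optimal solution, namely the unique solution of $x=g(x)$. *)

theory Defs
  imports "HOL-Analysis.Analysis"
begin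

text \<open>Order on real^'n is the library's componentwise order (x \<le> y iff all x$i \<le> y$i).
  Strict componentwise inequality is written out explicitly below.\<close>

definition standard_if :: "(real^'n \<Rightarrow> real^'n) \<Rightarrow> bool" where
  "standard_if I \<longleftrightarrow>
     (\<forall>p. 0 \<le> p \<longrightarrow> (\<forall>i. 0 < I p $ i)) \<and>
     (\<forall>p q. 0 \<le> q \<and> q \<le> p \<longrightarrow> I q \<le> I p) \<and>
     (\<forall>p (c::real). 0 \<le> p \<and> c > 1 \<longrightarrow> (\<forall>i. I (c *\<^sub>R p) $ i < c * I p $ i))"

definition pareto_optimal :: "('a \<Rightarrow> real^'m) \<Rightarrow> 'a set \<Rightarrow> 'a \<Rightarrow> bool" where
  "pareto_optimal obj F x \<longleftrightarrow>
     x \<in> F \<and> \<not> (\<exists>y\<in>F. obj y \<le> obj x \<and> obj y \<noteq> obj x)"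

definition fast_lipschitz :: "('a::ord \<Rightarrow> real^'m) \<Rightarrow> ('a \<Rightarrow> 'a) \<Rightarrow> 'a set \<Rightarrow> bool" where
  "fast_lipschitz g0 g X \<longleftrightarrow>
     (\<exists>!x. x \<in> X \<and> x = g x) \<and>
     (\<forall>x. x \<in> X \<and> x = g x \<longrightarrow>
        pareto_optimal g0 {y\<in>X. g y \<le> y} x \<and>
        (\<forall>y. pareto_optimal g0 {y\<in>X. g y \<le> y} y \<longrightarrow> y = x))"

definition vexp :: "real^'n \<Rightarrow> real^'n" where
  "vexp x = (\<chi> i. exp (x $ i))"

definition vln :: "real^'n \<Rightarrow> real^'n" where
  "vln x = (\<chi> i. ln (x $ i))"

end

theory Submission
  imports Defs
begin

(* Work in the order box B = {pmin..pmax} of strictly positive vectors.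
   (1) Standard interference functions satisfy Yates' comparison principle: a positive
       p with p <= I p lies below every positive q with I q <= q.  Hence I has at most
       one fixed point in B, and that fixed point is the least feasible point.
   (2) I is monotone and continuous on B, so the orbits of pmin and pmax are monotone,
       bounded and converge to fixed points; by (1) both limits coincide, and every
       orbit starting in B is squeezed between them.  This gives existence of the
       fixed point p* and convergence of the iteration p(k+1) = I(p(k)).
   (3) A nonnegative Jacobian with non-zero rows makes kappa monotone on B and
       injective along comparable pairs (sign of the derivative along the segment).
   (4) A least feasible point at which the objective is strictly dominated by its values
       elsewhere is the unique Pareto optimum; with (1) and (3) this applies to p*.
   (5) The change of variables x = ln p is an order isomorphism between positive
       vectors and all vectors, transporting fixed points, feasible sets and Pareto
       optima; so the log problem is Fast-Lipschitz. *)

lemma box_positive: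
  fixes pmin pmax x :: "real^'n"
  assumes "\<forall>i. 0 < pmin $ i" and "x \<in> {pmin..pmax}"
  shows "\<forall>i. 0 < x $ i"
  using assms by (auto simp: less_eq_vec_def intro: order.strict_trans2)

lemma positive_imp_nonneg: "\<forall>i. 0 < x $ i \<Longrightarrow> 0 \<le> (x :: real^'n)"
  by (simp add: less_eq_vec_def less_imp_le)

lemma closed_box_cart: "closed {a..b :: real^'n}"
proof -
  have "{a..b} = {x. \<forall>i. a$i \<le> x$i} \<inter> {x. \<forall>i. x$i \<le> b$i}"
    by (auto simp: less_eq_vec_def)
  thus ?thesis by (simp add: closed_Int closed_interval_left_cart closed_interval_right_cart)
qed

section \<open>Standard interference functions\<close>

text \<open>If p > q somewhere, scale q by the largest ratio
  c = max p_j/q_j > 1 so that p \<le> c q with equality at some i; monotonicity and strict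
  scalability then give p_i \<le> I(p)_i \<le> I(c q)_i < c I(q)_i \<le> c q_i = p_i.\<close>
lemma standard_comparison:
  fixes I :: "real^'n \<Rightarrow> real^'n"
  assumes std: "standard_if I" and p: "\<forall>i. 0 < p$i" and q: "\<forall>i. 0 < q$i"
    and pI: "p \<le> I p" and qI: "I q \<le> q"
  shows "p \<le> q"
proof (rule ccontr)
  assume "\<not> p \<le> q"
  then obtain i0 where i0: "q$i0 < p$i0" by (auto simp: less_eq_vec_def not_le)
  define r where "r j = p$j / q$j" for j
  define c where "c = Max (range r)"
  have "c \<in> range r" unfolding c_def by (rule Max_in) auto
  then obtain i where ci: "c = r i" by auto
  have r_le: "r j \<le> c" for j unfolding c_def by (rule Max_ge) auto
  have "r i0 > 1" unfolding r_def using i0 q by (simp add: divide_simps)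
  with r_le have c1: "c > 1" by (meson less_le_trans)
  have p_le_cq: "p \<le> c *\<^sub>R q"
  proof -
    have "p$j \<le> (c *\<^sub>R q)$j" for j
    proof -
      have "p$j = r j * q$j" unfolding r_def using q[rule_format, of j] by (simp add: divide_simps)
      also have "\<dots> \<le> c * q$j" using r_le[of j] q by (simp add: mult_right_mono less_imp_le)
      finally show ?thesis by simp
    qed
    thus ?thesis by (simp add: less_eq_vec_def)
  qed
  have mono: "I p \<le> I (c *\<^sub>R q)"
    using std positive_imp_nonneg[OF p] p_le_cq unfolding standard_if_def by blast
  have scal: "I (c *\<^sub>R q) $ i < c * I q $ i"
    using std positive_imp_nonneg[OF q] c1 unfolding standard_if_def by blast
  have "p$i \<le> I p $ i" using pI by (simp add: less_eq_vec_def)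
  also have "\<dots> \<le> I (c *\<^sub>R q) $ i" using mono by (simp add: less_eq_vec_def)
  also have "\<dots> < c * I q $ i" by (rule scal)
  also have "\<dots> \<le> c * q $ i" using qI c1 by (simp add: less_eq_vec_def)
  also have "\<dots> = p $ i" using ci q[rule_format, of i] unfolding r_def by (simp add: divide_simps)
  finally show False by simp
qed

lemma standard_fixed_point_unique:
  fixes I :: "real^'n \<Rightarrow> real^'n"
  assumes "standard_if I" "\<forall>i. 0 < p$i" "\<forall>i. 0 < q$i" "I p = p" "I q = q"
  shows "p = q"
  using standard_comparison[of I p q] standard_comparison[of I q p] assms
  by (auto intro: order.antisym)

section \<open>Fixed-point iteration in the box\<close>

lemma monotone_box_sequence_converges:
  fixes s :: "nat \<Rightarrow> real^'n"
  assumes in_box: "\<And>k. s k \<in> {a..b}" and mono: "\<And>i. monoseq (\<lambda>k. s k $ i)"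
  shows "\<exists>L\<in>{a..b}. s \<longlonglongrightarrow> L"
proof -
  have "convergent (\<lambda>k. s k $ i)" for i
  proof (rule Bseq_monoseq_convergent[OF _ mono])
    have "norm (s k $ i) \<le> max \<bar>a $ i\<bar> \<bar>b $ i\<bar>" for k
    proof -
      have "a $ i \<le> s k $ i" "s k $ i \<le> b $ i" using in_box[of k] by (auto simp: less_eq_vec_def)
      then show ?thesis by (simp add: abs_le_iff) arith
    qed
    thus "Bseq (\<lambda>k. s k $ i)" by (rule BseqI')
  qed
  then have "(\<lambda>k. s k $ i) \<longlonglongrightarrow> (\<chi> i. lim (\<lambda>k. s k $ i)) $ i" for i
    by (simp add: convergent_LIMSEQ_iff)
  then have "s \<longlonglongrightarrow> (\<chi> i. lim (\<lambda>k. s k $ i))" by (rule vec_tendstoI)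
  moreover have "(\<chi> i. lim (\<lambda>k. s k $ i)) \<in> {a..b}"
    by (rule closed_sequentially[OF closed_box_cart in_box]) (fact calculation)
  ultimately show ?thesis by blast
qed

lemma orbit_limit_is_fixed_point:
  fixes f :: "'a::t2_space \<Rightarrow> 'a"
  assumes cont: "continuous_on S f" and in_S: "\<And>k. s k \<in> S" and orbit: "\<And>k. s (Suc k) = f (s k)"
    and lim: "s \<longlonglongrightarrow> L" and L: "L \<in> S"
  shows "f L = L"
proof (rule LIMSEQ_unique[of "\<lambda>k. f (s k)"])
  show "(\<lambda>k. f (s k)) \<longlonglongrightarrow> f L"
    using cont lim L in_S by (auto intro: continuous_on_tendsto_compose)
  show "(\<lambda>k. f (s k)) \<longlonglongrightarrow> L"
    using LIMSEQ_Suc[OF lim] by (simp add: orbit)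
qed

lemma iterates_monotone:
  fixes I :: "'a::order \<Rightarrow> 'a"
  assumes maps: "I ` B \<subseteq> B" and mono: "\<And>x y. x \<in> B \<Longrightarrow> y \<in> B \<Longrightarrow> x \<le> y \<Longrightarrow> I x \<le> I y"
    and "x \<in> B" "y \<in> B" "x \<le> y"
  shows "(I ^^ k) x \<le> (I ^^ k) y \<and> (I ^^ k) x \<in> B \<and> (I ^^ k) y \<in> B"
  by (induction k) (use assms in auto)

lemma monotone_orbit_converges:
  fixes I :: "real^'n \<Rightarrow> real^'n"
  assumes maps: "I ` {a..b} \<subseteq> {a..b}" and cont: "continuous_on {a..b} I"
    and mono: "\<And>x y. x \<in> {a..b} \<Longrightarrow> y \<in> {a..b} \<Longrightarrow> x \<le> y \<Longrightarrow> I x \<le> I y"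
    and x0: "x0 \<in> {a..b}" and start: "x0 \<le> I x0 \<or> I x0 \<le> x0"
  shows "\<exists>L\<in>{a..b}. (\<lambda>k. (I ^^ k) x0) \<longlonglongrightarrow> L \<and> I L = L"
proof -
  have Ix0: "I x0 \<in> {a..b}" using maps x0 by blast
  have in_box: "(I ^^ k) x0 \<in> {a..b}" for k
    using iterates_monotone[OF maps mono x0 x0] by blast
  have "monoseq (\<lambda>k. (I ^^ k) x0 $ i)" for i
  proof (cases "x0 \<le> I x0")
    case True
    then have "(I ^^ k) x0 \<le> (I ^^ Suc k) x0" for k
      using iterates_monotone[OF maps mono x0 Ix0, of k] by (simp add: funpow_Suc_right del: funpow.simps)
    then show ?thesis unfolding monoseq_Suc by (auto simp: less_eq_vec_def)
  next
    case False
    then have "(I ^^ Suc k) x0 \<le> (I ^^ k) x0" for k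
      using start iterates_monotone[OF maps mono Ix0 x0, of k]
      by (simp add: funpow_Suc_right del: funpow.simps)
    then show ?thesis unfolding monoseq_Suc by (auto simp: less_eq_vec_def)
  qed
  then obtain L where L: "L \<in> {a..b}" "(\<lambda>k. (I ^^ k) x0) \<longlonglongrightarrow> L"
    using monotone_box_sequence_converges[of "\<lambda>k. (I ^^ k) x0"] in_box by blast
  moreover have "I L = L"
    by (rule orbit_limit_is_fixed_point[OF cont in_box _ L(2) L(1)]) simp
  ultimately show ?thesis by blast
qed

lemma differentiable_on_orthant_imp_continuous_on:
  fixes I :: "real^'n \<Rightarrow> real^'n"
  assumes diff: "\<forall>p. 0 \<le> p \<longrightarrow> I differentiable (at p within {q. 0 \<le> q})"
    and sub: "S \<subseteq> {q. 0 \<le> q}"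
  shows "continuous_on S I"
  unfolding continuous_on_eq_continuous_within
proof
  fix x assume "x \<in> S"
  then have "continuous (at x within {q. 0 \<le> q}) I"
    using diff sub differentiable_imp_continuous_within by blast
  then show "continuous (at x within S) I" by (rule continuous_within_subset) (rule sub)
qed

text \<open>The orbits of
  pmin and pmax converge to fixed points, which coincide, and squeeze every other orbit.\<close>
lemma standard_iteration_converges:
  fixes I :: "real^'n \<Rightarrow> real^'n"
  assumes pmin_pos: "\<forall>i. 0 < pmin $ i" and pmin_le: "pmin \<le> pmax"
    and std: "standard_if I" and maps: "I ` {pmin..pmax} \<subseteq> {pmin..pmax}"
    and cont: "continuous_on {pmin..pmax} I"
  shows "\<exists>p\<in>{pmin..pmax}. I p = p \<and> (\<forall>p0\<in>{pmin..pmax}. (\<lambda>k. (I ^^ k) p0) \<longlonglongrightarrow> p)"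
proof -
  let ?B = "{pmin..pmax}"
  have mono: "I x \<le> I y" if "x \<in> ?B" "y \<in> ?B" "x \<le> y" for x y
    using std that positive_imp_nonneg[OF box_positive[OF pmin_pos]] unfolding standard_if_def by blast
  have pminB: "pmin \<in> ?B" and pmaxB: "pmax \<in> ?B" using pmin_le by auto
  have "I pmin \<in> ?B" "I pmax \<in> ?B" using maps pminB pmaxB by blast+
  then have "pmin \<le> I pmin" and "I pmax \<le> pmax" by simp_all
  obtain lo where lo: "lo \<in> ?B" "(\<lambda>k. (I ^^ k) pmin) \<longlonglongrightarrow> lo" "I lo = lo"
    using monotone_orbit_converges[OF maps cont mono pminB] \<open>pmin \<le> I pmin\<close> by blast
  obtain hi where hi: "hi \<in> ?B" "(\<lambda>k. (I ^^ k) pmax) \<longlonglongrightarrow> hi" "I hi = hi"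
    using monotone_orbit_converges[OF maps cont mono pmaxB] \<open>I pmax \<le> pmax\<close> by blast
  have "hi = lo"
    by (rule standard_fixed_point_unique[OF std box_positive[OF pmin_pos hi(1)]
          box_positive[OF pmin_pos lo(1)] hi(3) lo(3)])
  have "(\<lambda>k. (I ^^ k) p0) \<longlonglongrightarrow> lo" if p0: "p0 \<in> ?B" for p0
  proof (rule vec_tendstoI)
    fix i
    have below: "(I ^^ k) pmin $ i \<le> (I ^^ k) p0 $ i" and above: "(I ^^ k) p0 $ i \<le> (I ^^ k) pmax $ i" for k
      using iterates_monotone[OF maps mono pminB p0, of k] iterates_monotone[OF maps mono p0 pmaxB, of k] p0
      by (simp_all add: less_eq_vec_def)
    show "(\<lambda>k. (I ^^ k) p0 $ i) \<longlonglongrightarrow> lo $ i"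
    proof (rule tendsto_sandwich[of "\<lambda>k. (I ^^ k) pmin $ i" _ _ "\<lambda>k. (I ^^ k) pmax $ i"])
      show "\<forall>\<^sub>F k in sequentially. (I ^^ k) pmin $ i \<le> (I ^^ k) p0 $ i" using below by simp
      show "\<forall>\<^sub>F k in sequentially. (I ^^ k) p0 $ i \<le> (I ^^ k) pmax $ i" using above by simp
      show "(\<lambda>k. (I ^^ k) pmin $ i) \<longlonglongrightarrow> lo $ i" using tendsto_vec_nth[OF lo(2)] .
      show "(\<lambda>k. (I ^^ k) pmax $ i) \<longlonglongrightarrow> lo $ i" using tendsto_vec_nth[OF hi(2)] \<open>hi = lo\<close> by simp
    qed
  qed
  with lo show ?thesis by blast
qed

section \<open>Objectives with a nonnegative Jacobian\<close>

lemma linear_component_expansion: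
  fixes D :: "real^'n \<Rightarrow> real^'m"
  assumes "linear D"
  shows "D v $ j = (\<Sum>i\<in>UNIV. v$i * D (axis i 1) $ j)"
proof -
  have v: "v = (\<Sum>i\<in>UNIV. v$i *\<^sub>R axis i 1)"
    by (simp add: vec_eq_iff sum_component axis_def if_distrib sum.delta sum.delta' cong: if_cong)
  have "D v = (\<Sum>i\<in>UNIV. v$i *\<^sub>R D (axis i 1))"
    by (subst v) (simp add: linear_sum[OF assms] linear_scale[OF assms])
  thus ?thesis by (simp add: sum_component)
qed

lemma nonneg_matrix_preserves_nonneg:
  fixes D :: "real^'n \<Rightarrow> real^'m"
  assumes "linear D" and nonneg: "\<forall>i j. 0 \<le> D (axis i 1) $ j" and v: "0 \<le> v"
  shows "0 \<le> D v $ j"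
  unfolding linear_component_expansion[OF \<open>linear D\<close>, of v j]
  using nonneg v by (intro sum_nonneg) (simp add: less_eq_vec_def)

lemma nonneg_matrix_sum_positive:
  fixes D :: "real^'n \<Rightarrow> real^'m"
  assumes lin: "linear D" and nonneg: "\<forall>i j. 0 \<le> D (axis i 1) $ j"
    and rows: "\<forall>i. \<exists>j. D (axis i 1) $ j \<noteq> 0" and v: "0 \<le> v" "v \<noteq> 0"
  shows "0 < (\<Sum>j\<in>UNIV. D v $ j)"
proof -
  obtain i0 where "v $ i0 \<noteq> 0" using v(2) by (auto simp: vec_eq_iff)
  then have i0: "0 < v $ i0" using v(1) by (auto simp: less_eq_vec_def order_less_le)
  obtain j0 where j0: "D (axis i0 1) $ j0 \<noteq> 0" using rows by blast
  have "0 < (\<Sum>j\<in>UNIV. D (axis i0 1) $ j)"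
    by (rule sum_pos2[of UNIV j0]) (use j0 nonneg in \<open>auto simp: order_less_le\<close>)
  hence "0 < (\<Sum>j\<in>UNIV. v $ i0 * D (axis i0 1) $ j)" using i0 by (simp add: sum_distrib_left[symmetric])
  also have "\<dots> \<le> (\<Sum>j\<in>UNIV. D v $ j)"
  proof (rule sum_mono)
    fix j
    have "0 \<le> v $ i * D (axis i 1) $ j" for i
      using v(1) nonneg by (simp add: less_eq_vec_def)
    then show "v $ i0 * D (axis i0 1) $ j \<le> D v $ j"
      unfolding linear_component_expansion[OF lin, of v j]
      by (intro member_le_sum[of i0 UNIV "\<lambda>i. v $ i * D (axis i 1) $ j"]) auto
  qed
  finally show ?thesis .
qed

lemma coordinate_derivative_along_line:
  fixes \<kappa> :: "real^'n \<Rightarrow> real^'m"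
  assumes "\<kappa> differentiable (at (p + t *\<^sub>R v))"
  shows "((\<lambda>t. \<kappa> (p + t *\<^sub>R v) $ j) has_real_derivative
           (frechet_derivative \<kappa> (at (p + t *\<^sub>R v)) v $ j)) (at t)"
proof -
  define D where "D = frechet_derivative \<kappa> (at (p + t *\<^sub>R v))"
  have \<kappa>: "(\<kappa> has_derivative D) (at (p + t *\<^sub>R v))"
    using assms frechet_derivative_works D_def by blast
  have line: "((\<lambda>t. p + t *\<^sub>R v) has_derivative (\<lambda>h. h *\<^sub>R v)) (at t)"
    by (auto intro!: derivative_eq_intros)
  have nth: "((\<lambda>x. x $ j) has_derivative (\<lambda>x. x $ j)) (at y)" for y :: "real^'m"
    by (rule bounded_linear_imp_has_derivative[OF bounded_linear_vec_nth])
  have "((\<lambda>t. \<kappa> (p + t *\<^sub>R v) $ j) has_derivative (\<lambda>h. D (h *\<^sub>R v) $ j)) (at t)"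
    using has_derivative_compose[OF has_derivative_compose[OF line \<kappa>] nth] by simp
  moreover have "(\<lambda>h. D (h *\<^sub>R v) $ j) = (*) (D v $ j)"
    using linear_scale[OF has_derivative_linear[OF \<kappa>]] by (auto simp: fun_eq_iff)
  ultimately show ?thesis unfolding D_def has_field_derivative_def by simp
qed

text \<open>Both follow by integrating
  the directional derivative along the segment from p to q, which stays in the box.\<close>
lemma objective_monotone:
  fixes \<kappa> :: "real^'n \<Rightarrow> real^'m"
  assumes \<kappa>_diff: "\<forall>p. \<kappa> differentiable (at p)"
    and grad_nonneg: "\<forall>p\<in>{pmin..pmax}. \<forall>i j. 0 \<le> frechet_derivative \<kappa> (at p) (axis i 1) $ j"
    and grad_rows: "\<forall>p\<in>{pmin..pmax}. \<forall>i. \<exists>j. frechet_derivative \<kappa> (at p) (axis i 1) $ j \<noteq> 0"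
    and pB: "p \<in> {pmin..pmax}" and qB: "q \<in> {pmin..pmax}" and pq: "p \<le> q"
  shows "\<kappa> p \<le> \<kappa> q \<and> (p \<noteq> q \<longrightarrow> \<kappa> p \<noteq> \<kappa> q)"
proof -
  define v where "v = q - p"
  define Dt where "Dt t = frechet_derivative \<kappa> (at (p + t *\<^sub>R v))" for t
  have v0: "0 \<le> v" using pq by (simp add: v_def)
  have segment: "p + t *\<^sub>R v \<in> {pmin..pmax}" if "0 \<le> t" "t \<le> 1" for t
  proof -
    have "pmin $ i \<le> p $ i + t * v $ i \<and> p $ i + t * v $ i \<le> pmax $ i" for i
    proof -
      have "pmin $ i \<le> p $ i" "p $ i \<le> q $ i" "q $ i \<le> pmax $ i"
        using pB qB pq by (auto simp: less_eq_vec_def)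
      moreover have "0 \<le> t * v $ i" "t * v $ i \<le> v $ i"
        using that v0 mult_left_le_one_le[of "v $ i" t] by (auto simp: less_eq_vec_def)
      ultimately show ?thesis by (simp add: v_def)
    qed
    thus ?thesis by (simp add: less_eq_vec_def)
  qed
  have lin: "linear (Dt t)" for t
    using \<kappa>_diff frechet_derivative_works has_derivative_linear unfolding Dt_def by blast
  have der: "((\<lambda>t. \<kappa> (p + t *\<^sub>R v) $ j) has_real_derivative Dt t v $ j) (at t)" for t j
    unfolding Dt_def using \<kappa>_diff by (intro coordinate_derivative_along_line) blast
  have ends: "p + 0 *\<^sub>R v = p" "p + 1 *\<^sub>R v = q" by (simp_all add: v_def)
  have slope_nonneg: "0 \<le> Dt t v $ j" if "0 \<le> t" "t \<le> 1" for t j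
    by (rule nonneg_matrix_preserves_nonneg[OF lin _ v0])
      (use grad_nonneg segment[OF that] in \<open>simp add: Dt_def\<close>)
  have slope_sum_pos: "0 < (\<Sum>j\<in>UNIV. Dt t v $ j)" if "0 \<le> t" "t \<le> 1" "v \<noteq> 0" for t
    by (rule nonneg_matrix_sum_positive[OF lin _ _ v0 \<open>v \<noteq> 0\<close>])
      (use grad_nonneg grad_rows segment[OF that(1,2)] in \<open>simp_all add: Dt_def\<close>)
  have "\<kappa> (p + 0 *\<^sub>R v) $ j \<le> \<kappa> (p + 1 *\<^sub>R v) $ j" for j
  proof (rule DERIV_nonneg_imp_nondecreasing[of 0 1])
    fix t :: real assume "0 \<le> t" "t \<le> 1"
    then show "\<exists>y. ((\<lambda>t. \<kappa> (p + t *\<^sub>R v) $ j) has_real_derivative y) (at t) \<and> 0 \<le> y"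
      using der slope_nonneg by blast
  qed simp
  moreover have "\<kappa> p \<noteq> \<kappa> q" if "p \<noteq> q"
  proof -
    have "v \<noteq> 0" using that by (simp add: v_def)
    have "(\<Sum>j\<in>UNIV. \<kappa> (p + 0 *\<^sub>R v) $ j) < (\<Sum>j\<in>UNIV. \<kappa> (p + 1 *\<^sub>R v) $ j)"
    proof (rule DERIV_pos_imp_increasing[of 0 1])
      fix t :: real assume "0 \<le> t" "t \<le> 1"
      show "\<exists>y. ((\<lambda>t. \<Sum>j\<in>UNIV. \<kappa> (p + t *\<^sub>R v) $ j) has_real_derivative y) (at t) \<and> 0 < y"
      proof (intro exI conjI)
        show "((\<lambda>t. \<Sum>j\<in>UNIV. \<kappa> (p + t *\<^sub>R v) $ j) has_real_derivative (\<Sum>j\<in>UNIV. Dt t v $ j)) (at t)"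
          by (rule DERIV_sum) (rule der)
        show "0 < (\<Sum>j\<in>UNIV. Dt t v $ j)" by (rule slope_sum_pos) (use \<open>0 \<le> t\<close> \<open>t \<le> 1\<close> \<open>v \<noteq> 0\<close> in auto)
      qed
    qed simp
    then show ?thesis unfolding ends by auto
  qed
  ultimately show ?thesis unfolding ends by (simp add: less_eq_vec_def)
qed

lemma dominating_point_unique_pareto:
  assumes x: "x \<in> F" and dom: "\<And>y. y \<in> F \<Longrightarrow> obj x \<le> obj y \<and> (y \<noteq> x \<longrightarrow> obj x \<noteq> obj y)"
  shows "pareto_optimal obj F x \<and> (\<forall>y. pareto_optimal obj F y \<longrightarrow> y = x)"
  using assms unfolding pareto_optimal_def by (metis order.antisym)

section \<open>The logarithmic change of variables\<close>

lemma vexp_vln: "\<forall>i. 0 < x $ i \<Longrightarrow> vexp (vln x) = x"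
  by (simp add: vexp_def vln_def vec_eq_iff)

lemma vln_le_iff: "\<forall>i. 0 < x $ i \<Longrightarrow> \<forall>i. 0 < y $ i \<Longrightarrow> vln x \<le> vln y \<longleftrightarrow> x \<le> y"
  by (simp add: vln_def less_eq_vec_def)

lemma vln_eq_iff: "\<forall>i. 0 < x $ i \<Longrightarrow> \<forall>i. 0 < y $ i \<Longrightarrow> vln x = vln y \<longleftrightarrow> x = y"
  by (simp add: vln_def vec_eq_iff)

lemma pareto_optimal_vln:
  fixes \<kappa> :: "real^'n \<Rightarrow> real^'m"
  assumes F: "\<And>x. x \<in> F \<Longrightarrow> \<forall>i. 0 < x $ i" and q: "\<forall>i. 0 < q $ i"
  shows "pareto_optimal (\<lambda>x. \<kappa> (vexp x)) (vln ` F) (vln q) \<longleftrightarrow> pareto_optimal \<kappa> F q"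
proof -
  have "vln q \<in> vln ` F \<longleftrightarrow> q \<in> F" using F q vln_eq_iff by blast
  then show ?thesis unfolding pareto_optimal_def using F q by (auto simp: vexp_vln)
qed

lemma fast_lipschitz_log_transform:
  fixes I :: "real^'n \<Rightarrow> real^'n" and \<kappa> :: "real^'n \<Rightarrow> real^'m"
  assumes pos: "\<And>x. x \<in> B \<Longrightarrow> \<forall>i. 0 < x $ i" and maps: "I ` B \<subseteq> B"
    and fix_p: "p \<in> B" "I p = p" and fix_unique: "\<And>q. q \<in> B \<Longrightarrow> I q = q \<Longrightarrow> q = p"
    and pareto: "pareto_optimal \<kappa> {q \<in> B. I q \<le> q} p"
    and pareto_unique: "\<And>q. pareto_optimal \<kappa> {q \<in> B. I q \<le> q} q \<Longrightarrow> q = p"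
  shows "fast_lipschitz (\<lambda>x. \<kappa> (vexp x)) (\<lambda>x. vln (I (vexp x))) (vln ` B)"
proof -
  let ?F = "{q \<in> B. I q \<le> q}"
  have posI: "\<forall>i. 0 < I q $ i" if "q \<in> B" for q using pos maps that by blast
  have feasible_vln: "{y \<in> vln ` B. vln (I (vexp y)) \<le> y} = vln ` ?F"
    using vln_le_iff[OF posI pos] by (auto simp: vexp_vln[OF pos])
  have fixed_vln: "x \<in> vln ` B \<and> x = vln (I (vexp x)) \<longleftrightarrow> x = vln p" for x
  proof
    assume "x \<in> vln ` B \<and> x = vln (I (vexp x))"
    then obtain q where q: "q \<in> B" "x = vln q" and "vln q = vln (I q)"
      using vexp_vln[OF pos] by force
    then have "q = I q" using vln_eq_iff[OF pos posI] by blast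
    then show "x = vln p" using fix_unique q by simp
  next
    assume "x = vln p"
    then show "x \<in> vln ` B \<and> x = vln (I (vexp x))" using fix_p vexp_vln[OF pos] by simp
  qed
  have pareto_vln: "pareto_optimal (\<lambda>x. \<kappa> (vexp x)) (vln ` ?F) y \<longleftrightarrow> y = vln p" for y
  proof
    assume po: "pareto_optimal (\<lambda>x. \<kappa> (vexp x)) (vln ` ?F) y"
    then obtain q where "q \<in> ?F" "y = vln q" unfolding pareto_optimal_def by blast
    with po show "y = vln p" using pareto_unique pareto_optimal_vln[of ?F q \<kappa>] pos by auto
  next
    show "y = vln p \<Longrightarrow> pareto_optimal (\<lambda>x. \<kappa> (vexp x)) (vln ` ?F) y"
      using pareto pareto_optimal_vln[of ?F p \<kappa>] pos fix_p by auto
  qed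
  show ?thesis
    unfolding fast_lipschitz_def feasible_vln fixed_vln pareto_vln by blast
qed

theorem mainTheorem3:
  fixes pmin pmax :: "real^'n"
    and I :: "real^'n \<Rightarrow> real^'n"
    and \<kappa> :: "real^'n \<Rightarrow> real^'m"
  assumes pmin_pos: "\<forall>i. 0 < pmin $ i"
    and pmin_le: "pmin \<le> pmax"
    and I_diff: "\<forall>p. 0 \<le> p \<longrightarrow> I differentiable (at p within {q. 0 \<le> q})"
    and I_std: "standard_if I"
    and I_maps: "I ` {pmin..pmax} \<subseteq> {pmin..pmax}"
    and \<kappa>_diff: "\<forall>p. \<kappa> differentiable (at p)"
    and grad_nonneg: "\<forall>p\<in>{pmin..pmax}. \<forall>i j.
                        0 \<le> frechet_derivative \<kappa> (at p) (axis i 1) $ j"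
    and grad_rows: "\<forall>p\<in>{pmin..pmax}. \<forall>i. \<exists>j.
                        frechet_derivative \<kappa> (at p) (axis i 1) $ j \<noteq> 0"
    and feasible: "\<exists>p\<in>{pmin..pmax}. I p \<le> p"
  shows "fast_lipschitz (\<lambda>x. \<kappa> (vexp x)) (\<lambda>x. vln (I (vexp x))) (vln ` {pmin..pmax})
       \<and> (\<exists>!p. p \<in> {pmin..pmax} \<and> I p = p)
       \<and> (\<forall>p. p \<in> {pmin..pmax} \<and> I p = p \<longrightarrow>
            pareto_optimal \<kappa> {q \<in> {pmin..pmax}. I q \<le> q} p
            \<and> (\<forall>q. pareto_optimal \<kappa> {q \<in> {pmin..pmax}. I q \<le> q} q \<longrightarrow> q = p)
            \<and> (\<forall>p0\<in>{pmin..pmax}. (\<lambda>k. (I ^^ k) p0) \<longlonglongrightarrow> p))"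
proof -
  let ?B = "{pmin..pmax}" and ?F = "{q \<in> {pmin..pmax}. I q \<le> q}"
  have pos: "\<And>x. x \<in> ?B \<Longrightarrow> \<forall>i. 0 < x $ i" using box_positive[OF pmin_pos] by blast
  have "continuous_on ?B I"
    by (rule differentiable_on_orthant_imp_continuous_on[OF I_diff])
      (use positive_imp_nonneg[OF pos] in blast)
  then obtain ps where ps: "ps \<in> ?B" "I ps = ps" "\<forall>p0\<in>?B. (\<lambda>k. (I ^^ k) p0) \<longlonglongrightarrow> ps"
    using standard_iteration_converges[OF pmin_pos pmin_le I_std I_maps] by blast
  have unique: "q = ps" if "q \<in> ?B" "I q = q" for q
    using standard_fixed_point_unique[OF I_std pos pos] that ps by blast
  have "\<kappa> ps \<le> \<kappa> q \<and> (q \<noteq> ps \<longrightarrow> \<kappa> ps \<noteq> \<kappa> q)" if "q \<in> ?F" for q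
    using standard_comparison[OF I_std pos pos, of ps q] ps that
      objective_monotone[OF \<kappa>_diff grad_nonneg grad_rows, of ps q] by auto
  then have pareto: "pareto_optimal \<kappa> ?F ps \<and> (\<forall>q. pareto_optimal \<kappa> ?F q \<longrightarrow> q = ps)"
    using ps by (intro dominating_point_unique_pareto) auto
  have "fast_lipschitz (\<lambda>x. \<kappa> (vexp x)) (\<lambda>x. vln (I (vexp x))) (vln ` ?B)"
    using fast_lipschitz_log_transform[OF pos I_maps ps(1,2) unique] pareto by blast
  with ps unique pareto show ?thesis by blast
qed

end
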